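(* Let $\gamma$ be a locally $K$-Lipschitz-graphical Jordan curve with continuous periodic parametrisation $\gamma:\mathbb{R}\to\mathbb{C}$ and local $K$-Lipschitz-graphical constant $\mu_K$. Let $\varphi:\mathbb{R}\to\mathbb{R}_{\ge0}$ be smooth, supported in $[-1,1]$, with $\int_{\mathbb{R}}\varphi=1$, and $\gamma_\varepsilon(s)=\int_{\mathbb{R}}\frac1\varepsilon\varphi(u/\varepsilon)\gamma(s-u)\,du$. Then for sufficiently small $\varepsilon>0$, $\gamma_\varepsilon$ is a locally $K$-Lipschitz-graphical Jordan curve, and, letting $\mu_{K,\varepsilon}$ be the local $K$-Lipschitz-graphical constant of $\gamma_\varepsilon$, we have $\liminf_{\varepsilon\to0}\mu_{K,\varepsilon}\ge\mu_K$.
   Context: Locally monotone: a Jordan curve with periodic parametrisation $\gamma$ is locally monotone if for every $\theta$ there are an open interval $U_\theta=(\theta_1,\theta_2)\ni\theta$ and a unit vector $v_\theta$ with $g_{v_\theta}(s)=\gamma(s)\cdot v_\theta$ strictly monotone on $U_\theta$. Let $f_{v_\theta}(s)=\gamma(s)\cdot n_\theta$ with $n_\theta$ a unit vector perpendicular to $v_\theta$. $\gamma$ is locally $K$-Lipschitz-graphical if for every $\theta$ there is such a pair $(v_\theta,U_\theta)$ for which moreover $f_{v_\theta}\circ g_{v_\theta}^{-1}$ is $K$-Lipschitz on $g_{v_\theta}(U_\theta)$. For a pair put $\mu(\theta,v_\theta,U_\theta)=\min\{|g_{v_\theta}(\theta)-g_{v_\theta}(\theta_1)|,|g_{v_\theta}(\theta)-g_{v_\theta}(\theta_2)|\}$;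 let $\mu_K(\theta)$ be the maximal (supremal) value of this over all pairs satisfying the $K$-Lipschitz condition, and the local $K$-Lipschitz-graphical constant is $\mu_K=\min_\theta\mu_K(\theta)$ (infimum). *)

theory Defs
  imports "HOL-Analysis.Analysis"
begin

definition jordan_curve :: "(real \<Rightarrow> complex) \<Rightarrow> bool" where
  "jordan_curve \<gamma> \<longleftrightarrow> continuous_on UNIV \<gamma> \<and>
     (\<exists>T>0. (\<forall>s. \<gamma> (s + T) = \<gamma> s) \<and> inj_on \<gamma> {0..<T})"

definition gv :: "(real \<Rightarrow> complex) \<Rightarrow> complex \<Rightarrow> real \<Rightarrow> real" where
  "gv \<gamma> v s = \<gamma> s \<bullet> v"

text \<open>f_v uses the unit normal n = i v (the sign of n is irrelevant for Lipschitz bounds).\<close>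
definition fv :: "(real \<Rightarrow> complex) \<Rightarrow> complex \<Rightarrow> real \<Rightarrow> real" where
  "fv \<gamma> v s = \<gamma> s \<bullet> (\<i> * v)"

definition lg_pair :: "real \<Rightarrow> (real \<Rightarrow> complex) \<Rightarrow> real \<Rightarrow> complex \<Rightarrow> real \<Rightarrow> real \<Rightarrow> bool" where
  "lg_pair K \<gamma> \<theta> v \<theta>1 \<theta>2 \<longleftrightarrow> norm v = 1 \<and> \<theta>1 < \<theta> \<and> \<theta> < \<theta>2 \<and>
     (strict_mono_on {\<theta>1<..<\<theta>2} (gv \<gamma> v) \<or> strict_antimono_on {\<theta>1<..<\<theta>2} (gv \<gamma> v)) \<and>
     lipschitz_on K (gv \<gamma> v ` {\<theta>1<..<\<theta>2}) (fv \<gamma> v \<circ> inv_into {\<theta>1<..<\<theta>2} (gv \<gamma> v))"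

definition locally_lipschitz_graphical :: "real \<Rightarrow> (real \<Rightarrow> complex) \<Rightarrow> bool" where
  "locally_lipschitz_graphical K \<gamma> \<longleftrightarrow> (\<forall>\<theta>. \<exists>v \<theta>1 \<theta>2. lg_pair K \<gamma> \<theta> v \<theta>1 \<theta>2)"

definition mu_pair :: "(real \<Rightarrow> complex) \<Rightarrow> real \<Rightarrow> complex \<Rightarrow> real \<Rightarrow> real \<Rightarrow> real" where
  "mu_pair \<gamma> \<theta> v \<theta>1 \<theta>2 = min \<bar>gv \<gamma> v \<theta> - gv \<gamma> v \<theta>1\<bar> \<bar>gv \<gamma> v \<theta> - gv \<gamma> v \<theta>2\<bar>"

definition mu_K_at :: "real \<Rightarrow> (real \<Rightarrow> complex) \<Rightarrow> real \<Rightarrow> real" where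
  "mu_K_at K \<gamma> \<theta> = Sup {mu_pair \<gamma> \<theta> v \<theta>1 \<theta>2 | v \<theta>1 \<theta>2. lg_pair K \<gamma> \<theta> v \<theta>1 \<theta>2}"

definition mu_K :: "real \<Rightarrow> (real \<Rightarrow> complex) \<Rightarrow> real" where
  "mu_K K \<gamma> = Inf (range (mu_K_at K \<gamma>))"

definition smooth_fun :: "(real \<Rightarrow> real) \<Rightarrow> bool" where
  "smooth_fun \<phi> \<longleftrightarrow> (\<exists>D. D 0 = \<phi> \<and> (\<forall>n x. (D n has_real_derivative D (Suc n) x) (at x)))"

definition mollify :: "(real \<Rightarrow> real) \<Rightarrow> real \<Rightarrow> (real \<Rightarrow> complex) \<Rightarrow> real \<Rightarrow> complex" where
  "mollify \<phi> \<epsilon> \<gamma> s = integral UNIV (\<lambda>u. complex_of_real (\<phi> (u / \<epsilon>) / \<epsilon>) * \<gamma> (s - u))"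

end

theory Submission
  imports Defs
begin

text \<open>Mollification averages translates of \<open>\<gamma>\<close> with nonnegative weights of total mass one, and it
commutes with the projections \<open>gv\<close> and \<open>fv\<close>. On a chart of \<open>\<gamma>\<close> on which \<open>gv\<close> increases and
\<open>\<bar>\<Delta>fv\<bar> \<le> K \<Delta>gv\<close>, the same holds for every translate by \<open>\<bar>u\<bar> \<le> \<epsilon>\<close> on the chart shrunk by \<open>\<epsilon>\<close>
at both ends, hence also for the average. As \<open>\<gamma>\<^sub>\<epsilon> \<rightarrow> \<gamma>\<close> uniformly, the values of \<open>gv\<close> entering
\<open>mu_pair\<close> move little, so the shrunken chart of \<open>\<gamma>\<^sub>\<epsilon>\<close> has almost the same \<open>\<mu>\<close>. Compactness of a
period makes this uniform: for small \<open>\<epsilon>\<close> every \<open>\<theta>\<close> has a chart of \<open>\<gamma>\<^sub>\<epsilon>\<close> of width at least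
\<open>\<rho>\<close> with \<open>\<mu> \<ge> \<mu>\<^sub>K - \<delta>\<close>. This gives the bound on the liminf, and injectivity on a period:
parameters closer than \<open>\<rho>\<close> (modulo the period) are separated by a chart, the others by the
positive minimum of \<open>\<bar>\<gamma> s - \<gamma> t\<bar>\<close> over such pairs together with uniform convergence.\<close>

section \<open>Mollification over the support of the kernel\<close>

definition scaled_kernel :: "(real \<Rightarrow> real) \<Rightarrow> real \<Rightarrow> real \<Rightarrow> real" where
  "scaled_kernel \<phi> \<epsilon> u = \<phi> (u / \<epsilon>) / \<epsilon>"

text \<open>For \<open>\<epsilon> > 0\<close> this agrees with \<open>mollify\<close> (\<open>mollify_eq_mollify_window\<close>), but it applies to any
Banach-valued function, in particular to the real projections \<open>gv\<close> and \<open>fv\<close>.\<close>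

definition mollify_window :: "(real \<Rightarrow> real) \<Rightarrow> real \<Rightarrow> (real \<Rightarrow> 'a::banach) \<Rightarrow> real \<Rightarrow> 'a" where
  "mollify_window \<phi> \<epsilon> h s = integral {-\<epsilon>..\<epsilon>} (\<lambda>u. scaled_kernel \<phi> \<epsilon> u *\<^sub>R h (s - u))"

lemma continuous_on_reflect_shift:
  fixes h :: "real \<Rightarrow> 'a::topological_space"
  assumes "continuous_on UNIV h"
  shows "continuous_on S (\<lambda>u. h (s - u))"
  by (rule continuous_on_compose2[OF assms]) (auto intro: continuous_intros)

locale mollifier =
  fixes \<phi> :: "real \<Rightarrow> real"
  assumes kernel_continuous: "continuous_on UNIV \<phi>"
    and kernel_nonneg: "\<And>u. \<phi> u \<ge> 0"
    and kernel_support: "\<And>u. \<bar>u\<bar> > 1 \<Longrightarrow> \<phi> u = 0"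
    and kernel_integral: "(\<phi> has_integral 1) UNIV"
begin

lemma continuous_on_scaled_kernel: "continuous_on S (scaled_kernel \<phi> \<epsilon>)"
  unfolding scaled_kernel_def divide_inverse
  by (intro continuous_intros continuous_on_compose2[OF kernel_continuous]) auto

lemma scaled_kernel_nonneg: "\<epsilon> > 0 \<Longrightarrow> scaled_kernel \<phi> \<epsilon> u \<ge> 0"
  using kernel_nonneg by (simp add: scaled_kernel_def)

lemma scaled_kernel_outside: "\<epsilon> > 0 \<Longrightarrow> u \<notin> {-\<epsilon>..\<epsilon>} \<Longrightarrow> scaled_kernel \<phi> \<epsilon> u = 0"
  using kernel_support[of "u / \<epsilon>"] by (auto simp: scaled_kernel_def abs_if field_simps)

lemma scaled_kernel_has_integral:
  assumes "\<epsilon> > 0"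
  shows "(scaled_kernel \<phi> \<epsilon> has_integral 1) {-\<epsilon>..\<epsilon>}"
proof -
  have "\<phi> integrable_on {-1..1}"
    by (rule integrable_continuous_interval) (auto intro: continuous_on_subset[OF kernel_continuous])
  then obtain i where i: "(\<phi> has_integral i) {-1..1}" by auto
  have "(\<phi> has_integral i) UNIV"
    by (rule has_integral_on_superset[OF i]) (auto intro!: kernel_support)
  with kernel_integral have "(\<phi> has_integral 1) {-1..1}"
    using i has_integral_unique by blast
  from has_integral_stretch_real[OF this, of "1/\<epsilon>"] assms
  have "((\<lambda>x. \<phi> (x / \<epsilon>)) has_integral \<epsilon>) ((\<lambda>x. x * \<epsilon>) ` {-1..1})"
    by simp
  moreover have "(\<lambda>x. x * \<epsilon>) ` {-1..1} = {-\<epsilon>..\<epsilon>}"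
    using image_mult_atLeastAtMost_if[of \<epsilon> "-1" 1] assms by (simp add: mult.commute)
  ultimately show ?thesis
    using has_integral_divide[of _ \<epsilon> _ \<epsilon>] assms unfolding scaled_kernel_def[abs_def] by auto
qed

lemma integrable_on_scaled_kernel_scaleR:
  fixes F :: "real \<Rightarrow> 'a::banach"
  assumes "continuous_on {-\<epsilon>..\<epsilon>} F"
  shows "(\<lambda>u. scaled_kernel \<phi> \<epsilon> u *\<^sub>R F u) integrable_on {-\<epsilon>..\<epsilon>}"
  by (intro integrable_continuous_interval continuous_intros continuous_on_scaled_kernel assms)

lemma integral_scaled_kernel_const:
  assumes "\<epsilon> > 0"
  shows "integral {-\<epsilon>..\<epsilon>} (\<lambda>u. scaled_kernel \<phi> \<epsilon> u * c) = c"
  using integral_unique[OF has_integral_mult_left[OF scaled_kernel_has_integral[OF assms]]] by simp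

lemma integral_scaled_kernel_mono:
  fixes F G :: "real \<Rightarrow> real"
  assumes "\<epsilon> > 0" "continuous_on {-\<epsilon>..\<epsilon>} F" "continuous_on {-\<epsilon>..\<epsilon>} G"
    and "\<And>u. u \<in> {-\<epsilon>..\<epsilon>} \<Longrightarrow> F u \<le> G u"
  shows "integral {-\<epsilon>..\<epsilon>} (\<lambda>u. scaled_kernel \<phi> \<epsilon> u * F u)
       \<le> integral {-\<epsilon>..\<epsilon>} (\<lambda>u. scaled_kernel \<phi> \<epsilon> u * G u)"
  using integrable_on_scaled_kernel_scaleR[OF assms(2)] integrable_on_scaled_kernel_scaleR[OF assms(3)]
  by (intro integral_le) (auto intro!: mult_left_mono scaled_kernel_nonneg assms)

lemma norm_integral_scaled_kernel_le:
  fixes F :: "real \<Rightarrow> 'a::banach"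
  assumes "\<epsilon> > 0" "continuous_on {-\<epsilon>..\<epsilon>} F"
  shows "norm (integral {-\<epsilon>..\<epsilon>} (\<lambda>u. scaled_kernel \<phi> \<epsilon> u *\<^sub>R F u))
       \<le> integral {-\<epsilon>..\<epsilon>} (\<lambda>u. scaled_kernel \<phi> \<epsilon> u * norm (F u))"
proof (rule integral_norm_bound_integral)
  have "continuous_on {-\<epsilon>..\<epsilon>} (\<lambda>u. norm (F u))"
    by (intro continuous_intros assms)
  then show "(\<lambda>u. scaled_kernel \<phi> \<epsilon> u * norm (F u)) integrable_on {-\<epsilon>..\<epsilon>}"
    using integrable_on_scaled_kernel_scaleR[where F="\<lambda>u. norm (F u)"] by simp
qed (use assms integrable_on_scaled_kernel_scaleR scaled_kernel_nonneg in auto)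

lemma mollify_window_diff:
  fixes h1 h2 :: "real \<Rightarrow> 'a::banach"
  assumes "continuous_on UNIV h1" "continuous_on UNIV h2"
  shows "mollify_window \<phi> \<epsilon> h1 s - mollify_window \<phi> \<epsilon> h2 t =
     integral {-\<epsilon>..\<epsilon>} (\<lambda>u. scaled_kernel \<phi> \<epsilon> u *\<^sub>R (h1 (s - u) - h2 (t - u)))"
  unfolding mollify_window_def scaleR_diff_right
  by (intro integral_diff[symmetric] integrable_on_scaled_kernel_scaleR
      continuous_on_reflect_shift assms)

lemma mollify_window_const:
  assumes "\<epsilon> > 0"
  shows "mollify_window \<phi> \<epsilon> (\<lambda>_. c) s = c"
  using integral_unique[OF has_integral_scaleR_left[OF scaled_kernel_has_integral[OF assms], of c]]
  by (simp add: mollify_window_def)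

lemma norm_mollify_window_diff_le:
  fixes h1 h2 :: "real \<Rightarrow> 'a::banach"
  assumes "\<epsilon> > 0" "continuous_on UNIV h1" "continuous_on UNIV h2"
    and "\<And>u. u \<in> {-\<epsilon>..\<epsilon>} \<Longrightarrow> norm (h1 (s - u) - h2 (t - u)) \<le> e"
  shows "norm (mollify_window \<phi> \<epsilon> h1 s - mollify_window \<phi> \<epsilon> h2 t) \<le> e"
proof -
  have cont: "continuous_on {-\<epsilon>..\<epsilon>} (\<lambda>u. h1 (s - u) - h2 (t - u))"
    by (intro continuous_intros continuous_on_reflect_shift assms)
  have "norm (mollify_window \<phi> \<epsilon> h1 s - mollify_window \<phi> \<epsilon> h2 t)
      \<le> integral {-\<epsilon>..\<epsilon>} (\<lambda>u. scaled_kernel \<phi> \<epsilon> u * norm (h1 (s - u) - h2 (t - u)))"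
    unfolding mollify_window_diff[OF assms(2,3)]
    by (rule norm_integral_scaled_kernel_le[OF assms(1) cont])
  also have "\<dots> \<le> integral {-\<epsilon>..\<epsilon>} (\<lambda>u. scaled_kernel \<phi> \<epsilon> u * e)"
    by (intro integral_scaled_kernel_mono continuous_intros cont assms)
  also have "\<dots> = e"
    by (rule integral_scaled_kernel_const[OF assms(1)])
  finally show ?thesis .
qed

lemma mollify_window_diff_ge:
  fixes h1 h2 :: "real \<Rightarrow> real"
  assumes "\<epsilon> > 0" "continuous_on UNIV h1" "continuous_on UNIV h2"
    and "\<And>u. u \<in> {-\<epsilon>..\<epsilon>} \<Longrightarrow> m \<le> h1 (s - u) - h2 (t - u)"
  shows "m \<le> mollify_window \<phi> \<epsilon> h1 s - mollify_window \<phi> \<epsilon> h2 t"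
proof -
  have "m = integral {-\<epsilon>..\<epsilon>} (\<lambda>u. scaled_kernel \<phi> \<epsilon> u * m)"
    by (rule integral_scaled_kernel_const[OF assms(1), symmetric])
  also have "\<dots> \<le> integral {-\<epsilon>..\<epsilon>} (\<lambda>u. scaled_kernel \<phi> \<epsilon> u * (h1 (s - u) - h2 (t - u)))"
    by (intro integral_scaled_kernel_mono continuous_intros continuous_on_reflect_shift assms)
  also have "\<dots> = mollify_window \<phi> \<epsilon> h1 s - mollify_window \<phi> \<epsilon> h2 t"
    using mollify_window_diff[OF assms(2,3)] by simp
  finally show ?thesis .
qed

lemma mollify_window_lipschitz:
  fixes f g :: "real \<Rightarrow> real"
  assumes "\<epsilon> > 0" "continuous_on UNIV f" "continuous_on UNIV g"
    and "\<And>u. u \<in> {-\<epsilon>..\<epsilon>} \<Longrightarrow> \<bar>f (s - u) - f (t - u)\<bar> \<le> K * (g (t - u) - g (s - u))"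
  shows "\<bar>mollify_window \<phi> \<epsilon> f s - mollify_window \<phi> \<epsilon> f t\<bar>
       \<le> K * (mollify_window \<phi> \<epsilon> g t - mollify_window \<phi> \<epsilon> g s)"
proof -
  have cont: "continuous_on {-\<epsilon>..\<epsilon>} (\<lambda>u. f (s - u) - f (t - u))"
    by (intro continuous_intros continuous_on_reflect_shift assms)
  have "\<bar>mollify_window \<phi> \<epsilon> f s - mollify_window \<phi> \<epsilon> f t\<bar>
      \<le> integral {-\<epsilon>..\<epsilon>} (\<lambda>u. scaled_kernel \<phi> \<epsilon> u * \<bar>f (s - u) - f (t - u)\<bar>)"
    using norm_integral_scaled_kernel_le[OF assms(1) cont]
    unfolding mollify_window_diff[OF assms(2,2)] by simp
  also have "\<dots> \<le> integral {-\<epsilon>..\<epsilon>} (\<lambda>u. scaled_kernel \<phi> \<epsilon> u * (K * (g (t - u) - g (s - u))))"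
    by (intro integral_scaled_kernel_mono continuous_intros continuous_on_reflect_shift assms)
  also have "\<dots> = K * (mollify_window \<phi> \<epsilon> g t - mollify_window \<phi> \<epsilon> g s)"
    by (simp add: mollify_window_diff[OF assms(3,3)] mult.left_commute)
  finally show ?thesis .
qed

lemma strict_mono_on_mollify_window:
  fixes g :: "real \<Rightarrow> real"
  assumes "\<epsilon> > 0" "continuous_on UNIV g" "strict_mono_on {a<..<b} g"
  shows "strict_mono_on {a+\<epsilon><..<b-\<epsilon>} (mollify_window \<phi> \<epsilon> g)"
proof (rule strict_mono_onI)
  fix s t assume st: "s \<in> {a+\<epsilon><..<b-\<epsilon>}" "t \<in> {a+\<epsilon><..<b-\<epsilon>}" "s < t"
  let ?h = "\<lambda>u. g (t - u) - g (s - u)"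
  have "continuous_on {-\<epsilon>..\<epsilon>} ?h"
    by (intro continuous_intros continuous_on_reflect_shift assms)
  from continuous_attains_inf[OF compact_Icc _ this] assms(1)
  obtain u0 where u0: "u0 \<in> {-\<epsilon>..\<epsilon>}" "\<And>u. u \<in> {-\<epsilon>..\<epsilon>} \<Longrightarrow> ?h u0 \<le> ?h u"
    by fastforce
  have "s - u0 \<in> {a<..<b}" "t - u0 \<in> {a<..<b}" "s - u0 < t - u0"
    using u0(1) st by auto
  then have "0 < ?h u0"
    using assms(3) by (simp add: strict_mono_onD)
  also have "?h u0 \<le> mollify_window \<phi> \<epsilon> g t - mollify_window \<phi> \<epsilon> g s"
    by (intro mollify_window_diff_ge assms u0(2))
  finally show "mollify_window \<phi> \<epsilon> g s < mollify_window \<phi> \<epsilon> g t" by simp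
qed

lemma inner_mollify_window:
  fixes h :: "real \<Rightarrow> 'a::{banach,real_inner}"
  assumes "continuous_on UNIV h"
  shows "mollify_window \<phi> \<epsilon> h s \<bullet> v = mollify_window \<phi> \<epsilon> (\<lambda>x. h x \<bullet> v) s"
  using integral_linear[OF integrable_on_scaled_kernel_scaleR bounded_linear_inner_left,
      of \<epsilon> "\<lambda>u. h (s - u)" v] continuous_on_reflect_shift[OF assms]
  by (simp add: mollify_window_def o_def)

lemma mollify_eq_mollify_window:
  assumes "\<epsilon> > 0" "continuous_on UNIV \<gamma>"
  shows "mollify \<phi> \<epsilon> \<gamma> s = mollify_window \<phi> \<epsilon> \<gamma> s"
proof -
  have "(\<lambda>u. scaled_kernel \<phi> \<epsilon> u *\<^sub>R \<gamma> (s - u)) integrable_on {-\<epsilon>..\<epsilon>}"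
    by (intro integrable_on_scaled_kernel_scaleR continuous_on_reflect_shift assms)
  then have "((\<lambda>u. scaled_kernel \<phi> \<epsilon> u *\<^sub>R \<gamma> (s - u)) has_integral mollify_window \<phi> \<epsilon> \<gamma> s) UNIV"
    unfolding mollify_window_def
    by (rule has_integral_on_superset[OF integrable_integral])
      (auto simp: scaled_kernel_outside[OF assms(1)])
  moreover have "(\<lambda>u. complex_of_real (\<phi> (u / \<epsilon>) / \<epsilon>) * \<gamma> (s - u))
      = (\<lambda>u. scaled_kernel \<phi> \<epsilon> u *\<^sub>R \<gamma> (s - u))"
    by (simp add: scaled_kernel_def scaleR_conv_of_real)
  ultimately show ?thesis
    unfolding mollify_def by (simp add: integral_unique)
qed

end

section \<open>Periodic functions\<close>

lemma periodic_add_of_int_mult: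
  fixes T :: real
  assumes "\<And>s. g (s + T) = g s"
  shows "g (s + of_int k * T) = g s"
proof (induction k arbitrary: s rule: int_induct[where k=0])
  case (step1 i)
  then show ?case using assms[of "s + of_int i * T"] by (simp add: algebra_simps)
next
  case (step2 i)
  then show ?case using assms[of "s + of_int (i - 1) * T"] by (simp add: algebra_simps)
qed simp

lemma reduce_mod_period:
  fixes T :: real
  assumes "T > 0"
  obtains k s' where "s = s' + of_int k * T" "0 \<le> s'" "s' < T"
proof -
  let ?k = "\<lfloor>s / T\<rfloor>"
  have "of_int ?k * T \<le> s" "s < (of_int ?k + 1) * T"
    using floor_divide_lower[OF assms] floor_divide_upper[OF assms] by auto
  then show ?thesis using that[of "s - of_int ?k * T" ?k] by (auto simp: algebra_simps)
qed

lemma range_periodic: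
  fixes T :: real
  assumes "T > 0" "\<And>s. g (s + T) = g s"
  shows "range g = g ` {0..T}"
proof -
  have "g s \<in> g ` {0..T}" for s
    using reduce_mod_period[OF assms(1), of s] periodic_add_of_int_mult[of g T, OF assms(2)]
    by (metis atLeastAtMost_iff image_eqI less_eq_real_def)
  then show ?thesis by auto
qed

lemma bounded_range_periodic:
  fixes g :: "real \<Rightarrow> 'a::metric_space"
  assumes "continuous_on UNIV g" "T > 0" "\<And>s. g (s + T) = g s"
  shows "bounded (range g)"
  unfolding range_periodic[of T g, OF assms(2,3)]
  by (intro compact_imp_bounded compact_continuous_image continuous_on_subset[OF assms(1)]) auto

lemma uniformly_continuous_periodic:
  fixes g :: "real \<Rightarrow> 'a::metric_space"
  assumes "continuous_on UNIV g" "T > 0" "\<And>s. g (s + T) = g s"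
  shows "uniformly_continuous_on UNIV g"
  unfolding uniformly_continuous_on_def
proof (intro allI impI)
  fix e :: real assume "e > 0"
  have "uniformly_continuous_on {-T..2*T} g"
    by (intro compact_uniformly_continuous continuous_on_subset[OF assms(1)]) auto
  with \<open>e > 0\<close> obtain d where d: "d > 0"
    "\<And>x y. x \<in> {-T..2*T} \<Longrightarrow> y \<in> {-T..2*T} \<Longrightarrow> dist y x < d \<Longrightarrow> dist (g y) (g x) < e"
    unfolding uniformly_continuous_on_def by metis
  have "dist (g y) (g x) < e" if xy: "dist y x < min d T" for x y
  proof -
    obtain k x' where x': "x = x' + of_int k * T" "0 \<le> x'" "x' < T"
      using reduce_mod_period[OF assms(2)] .
    define y' where "y' = y - of_int k * T"
    have "g x = g x'" "g y = g y'"
      using periodic_add_of_int_mult[of g T, OF assms(3), of y' k]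
        periodic_add_of_int_mult[of g T, OF assms(3), of x' k] x'(1) by (auto simp: y'_def)
    moreover have "dist y' x' < min d T"
      using xy x'(1) by (simp add: y'_def dist_real_def algebra_simps)
    ultimately show ?thesis
      using d(2)[of x' y'] x'(2,3) by (auto simp: dist_real_def abs_less_iff)
  qed
  then show "\<exists>d>0. \<forall>x\<in>UNIV. \<forall>y\<in>UNIV. dist y x < d \<longrightarrow> dist (g y) (g x) < e"
    using d(1) assms(2) by (intro exI[of _ "min d T"]) auto
qed

lemma periodic_injective_separated:
  fixes \<gamma> :: "real \<Rightarrow> 'a::metric_space"
  assumes "continuous_on UNIV \<gamma>" "\<And>s. \<gamma> (s + T) = \<gamma> s" "inj_on \<gamma> {0..<T}" "\<rho> > 0"
  obtains c where "c > 0"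
    "\<And>s t. 0 \<le> s \<Longrightarrow> t \<le> T \<Longrightarrow> \<rho> \<le> t - s \<Longrightarrow> t - s \<le> T - \<rho> \<Longrightarrow> c \<le> dist (\<gamma> s) (\<gamma> t)"
proof -
  define S where "S = {p :: real \<times> real. 0 \<le> fst p \<and> snd p \<le> T \<and> \<rho> \<le> snd p - fst p \<and> snd p - fst p \<le> T - \<rho>}"
  have "S \<subseteq> {0..T} \<times> {0..T}" "closed S"
    using assms(4) unfolding S_def
    by (auto intro!: closed_Collect_conj closed_Collect_le continuous_intros)
  then have "compact S"
    by (metis compact_Icc compact_Times compact_Int_closed inf.absorb_iff2)
  moreover have "continuous_on S (\<lambda>p. dist (\<gamma> (fst p)) (\<gamma> (snd p)))"
    by (intro continuous_intros continuous_on_compose2[OF assms(1)]) auto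
  ultimately have "closed ((\<lambda>p. dist (\<gamma> (fst p)) (\<gamma> (snd p))) ` S)"
    by (intro compact_imp_closed compact_continuous_image)
  moreover have "\<gamma> s \<noteq> \<gamma> t" if "(s, t) \<in> S" for s t
  proof (cases "t < T")
    case True
    with that assms(4) show ?thesis using assms(3) unfolding S_def inj_on_def by force
  next
    case False
    with that have "t = T" unfolding S_def by auto
    with that assms(4) show ?thesis
      using assms(2)[of 0] assms(3) unfolding S_def inj_on_def by force
  qed
  then have "0 \<notin> (\<lambda>p. dist (\<gamma> (fst p)) (\<gamma> (snd p))) ` S" by auto
  ultimately obtain c where "c > 0" "\<And>x. x \<in> (\<lambda>p. dist (\<gamma> (fst p)) (\<gamma> (snd p))) ` S \<Longrightarrow> c \<le> dist 0 x"
    using separate_point_closed by metis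
  then have "c \<le> dist (\<gamma> s) (\<gamma> t)" if "(s, t) \<in> S" for s t
    using that by force
  with \<open>c > 0\<close> show ?thesis
    using that[of c] unfolding S_def by auto
qed

section \<open>Lipschitz-graphical charts\<close>

lemma lg_pair_lipschitz:
  assumes "lg_pair K g \<theta> v a b" "s \<in> {a<..<b}" "t \<in> {a<..<b}"
  shows "\<bar>fv g v s - fv g v t\<bar> \<le> K * \<bar>gv g v s - gv g v t\<bar>"
proof -
  let ?I = "{a<..<b}"
  have "inj_on (gv g v) ?I"
    using assms(1) strict_mono_on_imp_inj_on strict_antimono_iff_antimono
    unfolding lg_pair_def by blast
  moreover have "lipschitz_on K (gv g v ` ?I) (fv g v \<circ> inv_into ?I (gv g v))"
    using assms(1) unfolding lg_pair_def by blast
  ultimately show ?thesis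
    using assms(2,3) by (auto simp: lipschitz_on_def dist_real_def)
qed

lemma lg_pair_nonneg: "lg_pair K g \<theta> v a b \<Longrightarrow> 0 \<le> K"
  unfolding lg_pair_def lipschitz_on_def by blast

lemma lg_pairI:
  assumes "norm v = 1" "a < \<theta>" "\<theta> < b" "0 \<le> K" "strict_mono_on {a<..<b} (gv g v)"
    and "\<And>s t. s \<in> {a<..<b} \<Longrightarrow> t \<in> {a<..<b} \<Longrightarrow> \<bar>fv g v s - fv g v t\<bar> \<le> K * \<bar>gv g v s - gv g v t\<bar>"
  shows "lg_pair K g \<theta> v a b"
proof -
  let ?I = "{a<..<b}"
  have "inj_on (gv g v) ?I" using assms(5) strict_mono_on_imp_inj_on by blast
  then have "lipschitz_on K (gv g v ` ?I) (fv g v \<circ> inv_into ?I (gv g v))"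
    using assms(4,6) by (auto simp: lipschitz_on_def dist_real_def)
  then show ?thesis using assms unfolding lg_pair_def by auto
qed

lemma lg_pair_increasing:
  assumes "lg_pair K g \<theta> v a b"
  obtains w where "lg_pair K g \<theta> w a b" "strict_mono_on {a<..<b} (gv g w)"
    "mu_pair g \<theta> w a b = mu_pair g \<theta> v a b"
proof (cases "strict_mono_on {a<..<b} (gv g v)")
  case False
  then have "strict_antimono_on {a<..<b} (gv g v)"
    using assms unfolding lg_pair_def by blast
  moreover have gv_uminus: "gv g (-v) = (\<lambda>s. - gv g v s)" and fv_uminus: "fv g (-v) = (\<lambda>s. - fv g v s)"
    by (auto simp: gv_def fv_def)
  ultimately have mono: "strict_mono_on {a<..<b} (gv g (-v))"
    by (auto simp: monotone_on_def)
  have "lg_pair K g \<theta> (-v) a b"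
  proof (rule lg_pairI[OF _ _ _ lg_pair_nonneg[OF assms] mono])
    show "norm (-v) = 1" "a < \<theta>" "\<theta> < b" using assms unfolding lg_pair_def by auto
    fix s t assume "s \<in> {a<..<b}" "t \<in> {a<..<b}"
    then show "\<bar>fv g (-v) s - fv g (-v) t\<bar> \<le> K * \<bar>gv g (-v) s - gv g (-v) t\<bar>"
      using lg_pair_lipschitz[OF assms] by (simp add: gv_uminus fv_uminus abs_minus_commute)
  qed
  moreover have "mu_pair g \<theta> (-v) a b = mu_pair g \<theta> v a b"
    unfolding mu_pair_def gv_uminus by (simp add: abs_minus_commute)
  ultimately show ?thesis using that mono by blast
qed (use assms that in blast)

lemma bdd_above_mu_pairs:
  assumes "bounded (range g)"
  shows "bdd_above {mu_pair g \<theta> v a b | v a b. lg_pair K g \<theta> v a b}"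
proof -
  obtain B where B: "\<And>s. norm (g s) \<le> B" using assms unfolding bounded_iff by auto
  have "mu_pair g \<theta> v a b \<le> 2 * B" if "lg_pair K g \<theta> v a b" for v a b
  proof -
    have "\<bar>gv g v s\<bar> \<le> B" for s
      using Cauchy_Schwarz_ineq2[of "g s" v] B[of s] that unfolding gv_def lg_pair_def by simp
    then have "\<bar>gv g v \<theta>\<bar> \<le> B" "\<bar>gv g v a\<bar> \<le> B" by auto
    then have "\<bar>gv g v \<theta> - gv g v a\<bar> \<le> 2 * B"
      using abs_triangle_ineq4[of "gv g v \<theta>" "gv g v a"] by linarith
    then show ?thesis unfolding mu_pair_def by simp
  qed
  then show ?thesis unfolding bdd_above_def by blast
qed

lemma abs_gv_diff_le: "norm v = 1 \<Longrightarrow> \<bar>gv g v s - gv h v t\<bar> \<le> norm (g s - h t)"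
  using Cauchy_Schwarz_ineq2[of "g s - h t" v] by (simp add: gv_def inner_diff_left)

lemma mu_pair_perturb:
  assumes "\<bar>gv g v \<theta>' - gv h v \<theta>\<bar> \<le> e" "\<bar>gv g v a' - gv h v a\<bar> \<le> e" "\<bar>gv g v b' - gv h v b\<bar> \<le> e"
  shows "mu_pair h \<theta> v a b - 2 * e \<le> mu_pair g \<theta>' v a' b'"
  using assms unfolding mu_pair_def by linarith

definition lg_chart :: "real \<Rightarrow> (real \<Rightarrow> complex) \<Rightarrow> real \<Rightarrow> real \<Rightarrow> real \<Rightarrow> bool" where
  "lg_chart K g \<theta> r m \<longleftrightarrow> (\<exists>v a b. lg_pair K g \<theta> v a b \<and> strict_mono_on {a<..<b} (gv g v) \<and>
     a \<le> \<theta> - r \<and> \<theta> + r \<le> b \<and> m \<le> mu_pair g \<theta> v a b)"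

lemma lg_chart_mono: "lg_chart K g \<theta> r m \<Longrightarrow> r' \<le> r \<Longrightarrow> m' \<le> m \<Longrightarrow> lg_chart K g \<theta> r' m'"
  unfolding lg_chart_def by fastforce

lemma lg_chart_shift:
  assumes "lg_chart K g \<theta> r m" "\<And>s. g (s + c) = g s"
  shows "lg_chart K g (\<theta> + c) r m"
proof -
  obtain v a b where chart: "lg_pair K g \<theta> v a b" "strict_mono_on {a<..<b} (gv g v)"
    "a \<le> \<theta> - r" "\<theta> + r \<le> b" "m \<le> mu_pair g \<theta> v a b"
    using assms(1) unfolding lg_chart_def by blast
  have gv_shift: "gv g v s = gv g v (s - c)" and fv_shift: "fv g v s = fv g v (s - c)" for s
    using assms(2)[of "s - c"] by (simp_all add: gv_def fv_def)
  have shift_mem: "s - c \<in> {a<..<b}" if "s \<in> {a+c<..<b+c}" for s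
    using that by auto
  have mono: "strict_mono_on {a+c<..<b+c} (gv g v)"
  proof (rule strict_mono_onI)
    fix s t assume "s \<in> {a+c<..<b+c}" "t \<in> {a+c<..<b+c}" "s < t"
    then have "gv g v (s - c) < gv g v (t - c)"
      by (intro strict_mono_onD[OF chart(2)] shift_mem) auto
    then show "gv g v s < gv g v t"
      by (simp only: gv_shift[of s] gv_shift[of t])
  qed
  have "lg_pair K g (\<theta> + c) v (a + c) (b + c)"
  proof (rule lg_pairI[OF _ _ _ lg_pair_nonneg[OF chart(1)] mono])
    show "norm v = 1" "a + c < \<theta> + c" "\<theta> + c < b + c"
      using chart(1) unfolding lg_pair_def by auto
    fix s t assume "s \<in> {a+c<..<b+c}" "t \<in> {a+c<..<b+c}"
    from lg_pair_lipschitz[OF chart(1) shift_mem[OF this(1)] shift_mem[OF this(2)]]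
    show "\<bar>fv g v s - fv g v t\<bar> \<le> K * \<bar>gv g v s - gv g v t\<bar>"
      by (simp only: fv_shift[of s] fv_shift[of t] gv_shift[of s] gv_shift[of t])
  qed
  moreover have "mu_pair g (\<theta> + c) v (a + c) (b + c) = mu_pair g \<theta> v a b"
    by (simp add: mu_pair_def gv_def assms(2))
  ultimately show ?thesis
    using chart mono unfolding lg_chart_def by (intro exI[of _ v] exI[of _ "a + c"] exI[of _ "b + c"]) auto
qed

lemma lg_chart_separates:
  assumes "lg_chart K g \<theta> r m" "\<theta> < t" "t < \<theta> + r"
  shows "g \<theta> \<noteq> g t"
proof -
  obtain v a b where chart: "lg_pair K g \<theta> v a b" "strict_mono_on {a<..<b} (gv g v)" "\<theta> + r \<le> b"
    using assms(1) unfolding lg_chart_def by blast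
  then have "\<theta> \<in> {a<..<b}" "t \<in> {a<..<b}"
    using assms(2,3) unfolding lg_pair_def by auto
  with chart(2) assms(2) have "gv g v \<theta> < gv g v t"
    by (simp add: strict_mono_onD)
  then show ?thesis by (auto simp: gv_def)
qed

lemma mu_K_ge_lg_chart:
  assumes "bounded (range g)" "\<And>\<theta>. lg_chart K g \<theta> r m"
  shows "m \<le> mu_K K g"
  unfolding mu_K_def
proof (rule cInf_greatest)
  fix x assume "x \<in> range (mu_K_at K g)"
  then obtain \<theta> where x: "x = mu_K_at K g \<theta>" by auto
  obtain v a b where pair: "lg_pair K g \<theta> v a b" and m: "m \<le> mu_pair g \<theta> v a b"
    using assms(2)[of \<theta>] unfolding lg_chart_def by blast
  have "mu_pair g \<theta> v a b \<le> x"
    unfolding x mu_K_at_def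
    by (rule cSup_upper[OF _ bdd_above_mu_pairs[OF assms(1)]]) (use pair in blast)
  with m show "m \<le> x" by linarith
qed simp

lemma inj_on_period_if_lg_charts_close:
  fixes \<gamma> :: "real \<Rightarrow> complex"
  assumes periodic: "\<And>s. g (s + T) = g s" and charts: "\<And>\<theta>. lg_chart K g \<theta> \<rho> m"
    and separated: "\<And>s t. 0 \<le> s \<Longrightarrow> t \<le> T \<Longrightarrow> \<rho> \<le> t - s \<Longrightarrow> t - s \<le> T - \<rho> \<Longrightarrow> c \<le> dist (\<gamma> s) (\<gamma> t)"
    and close: "\<And>s. dist (g s) (\<gamma> s) < c / 2"
  shows "inj_on g {0..<T}"
proof -
  have "g s \<noteq> g t" if st: "0 \<le> s" "s < t" "t < T" for s t
  proof -
    consider "t - s < \<rho>" | "T - \<rho> < t - s" | "\<rho> \<le> t - s" "t - s \<le> T - \<rho>" by linarith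
    then show ?thesis
    proof cases
      case 1
      then show ?thesis using lg_chart_separates[OF charts] st by simp
    next
      case 2
      then have "g t \<noteq> g (s + T)" using lg_chart_separates[OF charts] st by simp
      then show ?thesis by (simp add: periodic)
    next
      case 3
      then have "c \<le> dist (\<gamma> s) (\<gamma> t)" using separated st by simp
      moreover have "dist (\<gamma> s) (\<gamma> t) \<le> dist (g s) (\<gamma> s) + dist (g s) (g t) + dist (g t) (\<gamma> t)"
        using dist_triangle[of "\<gamma> s" "\<gamma> t" "g s"] dist_triangle[of "g s" "\<gamma> t" "g t"]
          dist_commute[of "\<gamma> s" "g s"] by linarith
      ultimately show ?thesis using close[of s] close[of t] by auto
    qed
  qed
  then show ?thesis
    by (intro inj_onI) (metis atLeastLessThan_iff linorder_neqE_linordered_idom)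
qed

section \<open>Mollified Jordan curves\<close>

lemma continuous_on_gv: "continuous_on UNIV g \<Longrightarrow> continuous_on UNIV (gv g v)"
  unfolding gv_def[abs_def] by (intro continuous_intros)

lemma continuous_on_fv: "continuous_on UNIV g \<Longrightarrow> continuous_on UNIV (fv g v)"
  unfolding fv_def[abs_def] by (intro continuous_intros)

locale mollified_curve = mollifier \<phi> for \<phi> +
  fixes \<gamma> :: "real \<Rightarrow> complex" and T K :: real
  assumes curve_continuous: "continuous_on UNIV \<gamma>"
    and period_pos: "T > 0"
    and curve_periodic: "\<And>s. \<gamma> (s + T) = \<gamma> s"
    and curve_inj: "inj_on \<gamma> {0..<T}"
    and curve_graphical: "locally_lipschitz_graphical K \<gamma>"
begin

abbreviation mollified :: "real \<Rightarrow> real \<Rightarrow> complex" where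
  "mollified \<epsilon> \<equiv> mollify \<phi> \<epsilon> \<gamma>"

lemma mollified_eq_window: "\<epsilon> > 0 \<Longrightarrow> mollified \<epsilon> = mollify_window \<phi> \<epsilon> \<gamma>"
  using mollify_eq_mollify_window[OF _ curve_continuous] by blast

lemma gv_mollified: "\<epsilon> > 0 \<Longrightarrow> gv (mollified \<epsilon>) v = mollify_window \<phi> \<epsilon> (gv \<gamma> v)"
  unfolding gv_def[abs_def] by (simp add: mollified_eq_window inner_mollify_window[OF curve_continuous])

lemma fv_mollified: "\<epsilon> > 0 \<Longrightarrow> fv (mollified \<epsilon>) v = mollify_window \<phi> \<epsilon> (fv \<gamma> v)"
  unfolding fv_def[abs_def] by (simp add: mollified_eq_window inner_mollify_window[OF curve_continuous])

lemma mollified_periodic: "\<epsilon> > 0 \<Longrightarrow> mollified \<epsilon> (s + T) = mollified \<epsilon> s"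
  using curve_periodic[of "s - _"] by (simp add: mollified_eq_window mollify_window_def algebra_simps)

lemma curve_uniformly_continuous:
  assumes "e > 0"
  obtains d where "d > 0" "\<And>x y. \<bar>x - y\<bar> < d \<Longrightarrow> norm (\<gamma> x - \<gamma> y) < e"
proof -
  from uniformly_continuous_periodic[OF curve_continuous period_pos curve_periodic] assms
  obtain d where "d > 0" "\<forall>x\<in>UNIV. \<forall>x'\<in>UNIV. \<bar>x' - x\<bar> < d \<longrightarrow> norm (\<gamma> x' - \<gamma> x) < e"
    unfolding uniformly_continuous_on_def dist_norm real_norm_def by blast
  then show ?thesis using that by auto
qed

lemma bounded_curve: "bounded (range \<gamma>)"
  by (rule bounded_range_periodic[OF curve_continuous period_pos curve_periodic])

lemma mollified_uniformly_close:
  assumes "e > 0"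
  shows "\<forall>\<^sub>F \<epsilon> in at_right 0. \<forall>s. norm (mollified \<epsilon> s - \<gamma> s) \<le> e"
proof -
  obtain d where d: "d > 0" "\<And>x y. \<bar>x - y\<bar> < d \<Longrightarrow> norm (\<gamma> x - \<gamma> y) < e"
    using curve_uniformly_continuous[OF assms] by blast
  have "norm (mollified \<epsilon> s - \<gamma> s) \<le> e" if "0 < \<epsilon>" "\<epsilon> < d" for \<epsilon> s
  proof -
    have "norm (\<gamma> (s - u) - \<gamma> s) \<le> e" if "u \<in> {-\<epsilon>..\<epsilon>}" for u
    proof -
      have "\<bar>u\<bar> < d" using that \<open>\<epsilon> < d\<close> by auto
      then show ?thesis using d(2)[of "s - u" s] by simp
    qed
    then have "norm (mollify_window \<phi> \<epsilon> \<gamma> s - mollify_window \<phi> \<epsilon> (\<lambda>_. \<gamma> s) s) \<le> e"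
      by (intro norm_mollify_window_diff_le curve_continuous continuous_on_const that(1))
    then show ?thesis
      by (simp add: mollified_eq_window[OF that(1)] mollify_window_const[OF that(1)])
  qed
  then show ?thesis
    unfolding eventually_at_right_field using d(1) by blast
qed

lemma mollified_continuous:
  assumes "\<epsilon> > 0"
  shows "continuous_on UNIV (mollified \<epsilon>)"
proof -
  have "\<exists>d>0. \<forall>x y. dist y x < d \<longrightarrow> dist (mollified \<epsilon> y) (mollified \<epsilon> x) < e" if "e > 0" for e
  proof -
    obtain d where d: "d > 0" "\<And>x y. \<bar>x - y\<bar> < d \<Longrightarrow> norm (\<gamma> x - \<gamma> y) < e / 2"
      using curve_uniformly_continuous[of "e / 2"] \<open>e > 0\<close> by auto
    have "norm (mollify_window \<phi> \<epsilon> \<gamma> y - mollify_window \<phi> \<epsilon> \<gamma> x) \<le> e / 2"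
      if "\<bar>y - x\<bar> < d" for x y
    proof (intro norm_mollify_window_diff_le assms curve_continuous)
      show "norm (\<gamma> (y - u) - \<gamma> (x - u)) \<le> e / 2" for u
        using d(2)[of "y - u" "x - u"] that by simp
    qed
    with d(1) \<open>e > 0\<close> show ?thesis
      by (intro exI[of _ d]) (force simp: dist_norm mollified_eq_window[OF assms])
  qed
  then have "uniformly_continuous_on UNIV (mollified \<epsilon>)"
    unfolding uniformly_continuous_on_def by blast
  then show ?thesis
    by (rule uniformly_continuous_imp_continuous)
qed

lemma bounded_mollified: "\<epsilon> > 0 \<Longrightarrow> bounded (range (mollified \<epsilon>))"
  by (rule bounded_range_periodic[OF mollified_continuous period_pos mollified_periodic])

lemma mu_K_le_mu_K_at: "mu_K K \<gamma> \<le> mu_K_at K \<gamma> \<theta>"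
proof -
  have "0 \<le> mu_K_at K \<gamma> x" for x
  proof -
    obtain v a b where pair: "lg_pair K \<gamma> x v a b"
      using curve_graphical unfolding locally_lipschitz_graphical_def by blast
    have "0 \<le> mu_pair \<gamma> x v a b"
      by (simp add: mu_pair_def)
    also have "\<dots> \<le> mu_K_at K \<gamma> x"
      unfolding mu_K_at_def
      by (rule cSup_upper[OF _ bdd_above_mu_pairs[OF bounded_curve]]) (use pair in blast)
    finally show ?thesis .
  qed
  then show ?thesis
    unfolding mu_K_def by (intro cInf_lower bdd_belowI[where m=0]) auto
qed

lemma lg_pair_mollified:
  assumes pair: "lg_pair K \<gamma> \<theta>0 v a b" and mono: "strict_mono_on {a<..<b} (gv \<gamma> v)"
    and "0 < \<epsilon>" "\<epsilon> \<le> \<eta>" "a + \<eta> < \<theta>" "\<theta> < b - \<eta>"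
  shows "lg_pair K (mollified \<epsilon>) \<theta> v (a + \<eta>) (b - \<eta>)"
    and "strict_mono_on {a+\<eta><..<b-\<eta>} (gv (mollified \<epsilon>) v)"
proof -
  let ?I = "{a+\<eta><..<b-\<eta>}"
  have gv_cont: "continuous_on UNIV (gv \<gamma> v)"
    by (rule continuous_on_gv[OF curve_continuous])
  have "strict_mono_on {a+\<epsilon><..<b-\<epsilon>} (gv (mollified \<epsilon>) v)"
    unfolding gv_mollified[OF \<open>0 < \<epsilon>\<close>]
    by (rule strict_mono_on_mollify_window[OF \<open>0 < \<epsilon>\<close> gv_cont mono])
  then show mono_\<epsilon>: "strict_mono_on ?I (gv (mollified \<epsilon>) v)"
    by (rule monotone_on_subset) (use \<open>\<epsilon> \<le> \<eta>\<close> in auto)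
  have lipschitz_ordered: "\<bar>fv (mollified \<epsilon>) v s - fv (mollified \<epsilon>) v t\<bar>
      \<le> K * \<bar>gv (mollified \<epsilon>) v s - gv (mollified \<epsilon>) v t\<bar>"
    if st: "s \<in> ?I" "t \<in> ?I" "s \<le> t" for s t
  proof -
    \<comment> \<open>Each translate by \<open>u\<close> satisfies the chart inequality; averaging with a nonnegative
      kernel preserves it.\<close>
    have "\<bar>fv \<gamma> v (s - u) - fv \<gamma> v (t - u)\<bar> \<le> K * (gv \<gamma> v (t - u) - gv \<gamma> v (s - u))"
      if "u \<in> {-\<epsilon>..\<epsilon>}" for u
    proof -
      have in_I: "s - u \<in> {a<..<b}" "t - u \<in> {a<..<b}"
        using that st \<open>\<epsilon> \<le> \<eta>\<close> by auto
      then have "gv \<gamma> v (s - u) \<le> gv \<gamma> v (t - u)"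
        using st(3) by (intro mono_onD[OF strict_mono_on_imp_mono_on[OF mono]]) auto
      then show ?thesis
        using lg_pair_lipschitz[OF pair in_I] by simp
    qed
    then have "\<bar>fv (mollified \<epsilon>) v s - fv (mollified \<epsilon>) v t\<bar>
        \<le> K * (gv (mollified \<epsilon>) v t - gv (mollified \<epsilon>) v s)"
      unfolding gv_mollified[OF \<open>0 < \<epsilon>\<close>] fv_mollified[OF \<open>0 < \<epsilon>\<close>]
      by (intro mollify_window_lipschitz \<open>0 < \<epsilon>\<close> gv_cont continuous_on_fv curve_continuous)
    moreover have "gv (mollified \<epsilon>) v s \<le> gv (mollified \<epsilon>) v t"
      using st by (intro mono_onD[OF strict_mono_on_imp_mono_on[OF mono_\<epsilon>]])
    ultimately show ?thesis by simp
  qed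
  show "lg_pair K (mollified \<epsilon>) \<theta> v (a + \<eta>) (b - \<eta>)"
  proof (rule lg_pairI[OF _ _ _ lg_pair_nonneg[OF pair] mono_\<epsilon>])
    show "norm v = 1" using pair unfolding lg_pair_def by blast
    show "a + \<eta> < \<theta>" "\<theta> < b - \<eta>" by fact+
    fix s t assume "s \<in> ?I" "t \<in> ?I"
    then show "\<bar>fv (mollified \<epsilon>) v s - fv (mollified \<epsilon>) v t\<bar> \<le> K * \<bar>gv (mollified \<epsilon>) v s - gv (mollified \<epsilon>) v t\<bar>"
      using lipschitz_ordered[of s t] lipschitz_ordered[of t s]
      by (cases "s \<le> t") (auto simp: abs_minus_commute)
  qed
qed

lemma lg_chart_mollified:
  assumes pair: "lg_pair K \<gamma> \<theta>0 v a b" and mono: "strict_mono_on {a<..<b} (gv \<gamma> v)"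
    and \<epsilon>: "0 < \<epsilon>" "\<epsilon> \<le> \<eta>" and window: "a + \<eta> \<le> \<theta> - r" "\<theta> + r \<le> b - \<eta>" "r > 0"
    and close: "\<And>s. norm (mollified \<epsilon> s - \<gamma> s) \<le> e"
    and near: "\<bar>gv \<gamma> v \<theta> - gv \<gamma> v \<theta>0\<bar> \<le> e" "\<bar>gv \<gamma> v (a + \<eta>) - gv \<gamma> v a\<bar> \<le> e"
      "\<bar>gv \<gamma> v (b - \<eta>) - gv \<gamma> v b\<bar> \<le> e"
  shows "lg_chart K (mollified \<epsilon>) \<theta> r (mu_pair \<gamma> \<theta>0 v a b - 4 * e)"
proof -
  have "norm v = 1"
    using pair unfolding lg_pair_def by blast
  then have perturb: "\<bar>gv (mollified \<epsilon>) v x - gv \<gamma> v y\<bar> \<le> 2 * e"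
    if "\<bar>gv \<gamma> v x - gv \<gamma> v y\<bar> \<le> e" for x y
    using abs_gv_diff_le[of v "mollified \<epsilon>" x \<gamma> x] close[of x] that by linarith
  have "mu_pair \<gamma> \<theta>0 v a b - 2 * (2 * e) \<le> mu_pair (mollified \<epsilon>) \<theta> v (a + \<eta>) (b - \<eta>)"
    by (intro mu_pair_perturb perturb near)
  moreover note lg_pair_mollified[OF pair mono \<epsilon>, of \<theta>]
  ultimately show ?thesis
    using window unfolding lg_chart_def
    by (intro exI[of _ v] exI[of _ "a + \<eta>"] exI[of _ "b - \<eta>"]) auto
qed

lemma lg_pair_increasing_mu_gt:
  assumes "\<delta> > 0"
  obtains v a b where "lg_pair K \<gamma> \<theta> v a b" "strict_mono_on {a<..<b} (gv \<gamma> v)"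
    "mu_K K \<gamma> - \<delta> < mu_pair \<gamma> \<theta> v a b"
proof -
  let ?S = "{mu_pair \<gamma> \<theta> v a b | v a b. lg_pair K \<gamma> \<theta> v a b}"
  have "?S \<noteq> {}"
    using curve_graphical unfolding locally_lipschitz_graphical_def by blast
  moreover have "mu_K K \<gamma> - \<delta> < Sup ?S"
    using mu_K_le_mu_K_at[of \<theta>] assms unfolding mu_K_at_def by linarith
  ultimately obtain v a b where "lg_pair K \<gamma> \<theta> v a b" "mu_K K \<gamma> - \<delta> < mu_pair \<gamma> \<theta> v a b"
    using less_cSup_iff[OF _ bdd_above_mu_pairs[OF bounded_curve]] by blast
  then show ?thesis
    using lg_pair_increasing that by metis
qed

lemma eventually_lg_chart_mollified_near:
  assumes "\<delta> > 0"
  shows "\<exists>r>0. \<forall>\<^sub>F \<epsilon> in at_right 0. \<forall>\<theta>. \<bar>\<theta> - \<theta>0\<bar> < r \<longrightarrow> lg_chart K (mollified \<epsilon>) \<theta> r (mu_K K \<gamma> - \<delta>)"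
proof -
  obtain v a b where pair: "lg_pair K \<gamma> \<theta>0 v a b" and mono: "strict_mono_on {a<..<b} (gv \<gamma> v)"
    and mu: "mu_K K \<gamma> - \<delta>/2 < mu_pair \<gamma> \<theta>0 v a b"
    by (rule lg_pair_increasing_mu_gt[of "\<delta>/2" \<theta>0]) (use assms in auto)
  have "continuous_on UNIV (gv \<gamma> v)"
    by (rule continuous_on_gv[OF curve_continuous])
  then have "\<exists>d>0. \<forall>y. \<bar>y - x\<bar> < d \<longrightarrow> \<bar>gv \<gamma> v y - gv \<gamma> v x\<bar> < \<delta>/8" for x
    using assms unfolding continuous_on_iff dist_real_def
    by (metis UNIV_I zero_less_divide_iff zero_less_numeral)
  then obtain da db d0 where "da > 0" "db > 0" "d0 > 0"
    and near_a: "\<And>y. \<bar>y - a\<bar> < da \<Longrightarrow> \<bar>gv \<gamma> v y - gv \<gamma> v a\<bar> < \<delta>/8"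
    and near_b: "\<And>y. \<bar>y - b\<bar> < db \<Longrightarrow> \<bar>gv \<gamma> v y - gv \<gamma> v b\<bar> < \<delta>/8"
    and near_\<theta>0: "\<And>y. \<bar>y - \<theta>0\<bar> < d0 \<Longrightarrow> \<bar>gv \<gamma> v y - gv \<gamma> v \<theta>0\<bar> < \<delta>/8"
    by metis
  define \<eta> where "\<eta> = min (min (da/2) (db/2)) (min ((\<theta>0 - a)/4) ((b - \<theta>0)/4))"
  define r where "r = min \<eta> d0"
  have "a < \<theta>0" "\<theta>0 < b"
    using pair unfolding lg_pair_def by auto
  then have "\<eta> > 0" "r > 0"
    using \<open>da > 0\<close> \<open>db > 0\<close> \<open>d0 > 0\<close> by (auto simp: \<eta>_def r_def)
  have "\<eta> \<le> da/2" "\<eta> \<le> db/2" "\<eta> \<le> (\<theta>0 - a)/4" "\<eta> \<le> (b - \<theta>0)/4" "r \<le> \<eta>" "r \<le> d0"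
    unfolding \<eta>_def r_def by (meson min.cobounded1 min.cobounded2 order_trans)+
  then have near_ends: "\<bar>gv \<gamma> v (a + \<eta>) - gv \<gamma> v a\<bar> \<le> \<delta>/8" "\<bar>gv \<gamma> v (b - \<eta>) - gv \<gamma> v b\<bar> \<le> \<delta>/8"
    using near_a[of "a + \<eta>"] near_b[of "b - \<eta>"] \<open>\<eta> > 0\<close> by auto
  have chart_near: "lg_chart K (mollified \<epsilon>) \<theta> r (mu_K K \<gamma> - \<delta>)"
    if "0 < \<epsilon>" "\<epsilon> \<le> \<eta>" "\<forall>s. norm (mollified \<epsilon> s - \<gamma> s) \<le> \<delta>/8" "\<bar>\<theta> - \<theta>0\<bar> < r" for \<epsilon> \<theta>
  proof (rule lg_chart_mono)
    show "lg_chart K (mollified \<epsilon>) \<theta> r (mu_pair \<gamma> \<theta>0 v a b - 4 * (\<delta>/8))"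
      using that near_ends near_\<theta>0[of \<theta>] \<open>r > 0\<close> \<open>r \<le> d0\<close> \<open>r \<le> \<eta>\<close> \<open>\<eta> \<le> (\<theta>0 - a)/4\<close> \<open>\<eta> \<le> (b - \<theta>0)/4\<close>
      by (intro lg_chart_mollified[OF pair mono]) (auto simp: abs_less_iff)
  qed (use mu in auto)
  have "\<forall>\<^sub>F \<epsilon> in at_right 0. 0 < \<epsilon> \<and> \<epsilon> \<le> \<eta>"
    unfolding eventually_at_right_field using \<open>\<eta> > 0\<close> by (intro exI[of _ \<eta>]) auto
  moreover have "\<forall>\<^sub>F \<epsilon> in at_right 0. \<forall>s. norm (mollified \<epsilon> s - \<gamma> s) \<le> \<delta>/8"
    by (rule mollified_uniformly_close) (use assms in simp)
  ultimately have "\<forall>\<^sub>F \<epsilon> in at_right 0. \<forall>\<theta>. \<bar>\<theta> - \<theta>0\<bar> < r \<longrightarrow> lg_chart K (mollified \<epsilon>) \<theta> r (mu_K K \<gamma> - \<delta>)"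
    by eventually_elim (use chart_near in blast)
  with \<open>r > 0\<close> show ?thesis by blast
qed

lemma eventually_lg_chart_mollified:
  assumes "\<delta> > 0"
  obtains \<rho> where "\<rho> > 0"
    "\<forall>\<^sub>F \<epsilon> in at_right 0. \<forall>\<theta>. lg_chart K (mollified \<epsilon>) \<theta> \<rho> (mu_K K \<gamma> - \<delta>)"
proof -
  let ?chart = "\<lambda>\<epsilon> \<theta> r. lg_chart K (mollified \<epsilon>) \<theta> r (mu_K K \<gamma> - \<delta>)"
  have "\<forall>c. \<exists>r>0. \<forall>\<^sub>F \<epsilon> in at_right 0. \<forall>\<theta>. \<bar>\<theta> - c\<bar> < r \<longrightarrow> ?chart \<epsilon> \<theta> r"
    using eventually_lg_chart_mollified_near[OF assms] by blast
  from choice[OF this] obtain R where "\<forall>c. R c > 0 \<and>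
      (\<forall>\<^sub>F \<epsilon> in at_right 0. \<forall>\<theta>. \<bar>\<theta> - c\<bar> < R c \<longrightarrow> ?chart \<epsilon> \<theta> (R c))"
    by blast
  then have R: "\<And>c. R c > 0"
    "\<And>c. \<forall>\<^sub>F \<epsilon> in at_right 0. \<forall>\<theta>. \<bar>\<theta> - c\<bar> < R c \<longrightarrow> ?chart \<epsilon> \<theta> (R c)"
    by auto
  have "{0..T} \<subseteq> (\<Union>c\<in>{0..T}. ball c (R c))"
    using R(1) by force
  then obtain C where C: "C \<subseteq> {0..T}" "finite C" "{0..T} \<subseteq> (\<Union>c\<in>C. ball c (R c))"
    by (rule compactE_image[OF compact_Icc open_ball])
  with period_pos have "C \<noteq> {}" by auto
  define \<rho> where "\<rho> = Min (R ` C)"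
  have "\<rho> > 0" "\<And>c. c \<in> C \<Longrightarrow> \<rho> \<le> R c"
    using C(2) \<open>C \<noteq> {}\<close> R(1) by (auto simp: \<rho>_def)
  have charts_C: "\<forall>\<^sub>F \<epsilon> in at_right 0. \<forall>c\<in>C. \<forall>\<theta>. \<bar>\<theta> - c\<bar> < R c \<longrightarrow> ?chart \<epsilon> \<theta> (R c)"
    using C(2) R(2) by (simp add: eventually_ball_finite)
  have chart_\<rho>: "?chart \<epsilon> \<theta> \<rho>"
    if \<epsilon>: "0 < \<epsilon>" and charts: "\<forall>c\<in>C. \<forall>\<theta>. \<bar>\<theta> - c\<bar> < R c \<longrightarrow> ?chart \<epsilon> \<theta> (R c)" for \<epsilon> \<theta>
  proof -
    obtain k \<theta>' where \<theta>': "\<theta> = \<theta>' + of_int k * T" "0 \<le> \<theta>'" "\<theta>' < T"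
      using reduce_mod_period[OF period_pos] .
    then obtain c where "c \<in> C" "\<bar>\<theta>' - c\<bar> < R c"
      using C(3) by (force simp: dist_real_def)
    then have "?chart \<epsilon> \<theta>' \<rho>"
      using charts \<open>\<And>c. c \<in> C \<Longrightarrow> \<rho> \<le> R c\<close> lg_chart_mono by blast
    then show ?thesis
      unfolding \<theta>'(1)
      by (rule lg_chart_shift) (rule periodic_add_of_int_mult[of "mollified \<epsilon>", OF mollified_periodic[OF \<epsilon>]])
  qed
  have "\<forall>\<^sub>F \<epsilon> in at_right 0. \<forall>\<theta>. ?chart \<epsilon> \<theta> \<rho>"
    using charts_C eventually_at_right_less by eventually_elim (use chart_\<rho> in blast)
  with \<open>\<rho> > 0\<close> show ?thesis by (rule that)
qed

lemma eventually_mollified_jordan_lipschitz_graphical: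
  "\<forall>\<^sub>F \<epsilon> in at_right 0. jordan_curve (mollified \<epsilon>) \<and> locally_lipschitz_graphical K (mollified \<epsilon>)"
proof -
  obtain \<rho> where "\<rho> > 0" and charts: "\<forall>\<^sub>F \<epsilon> in at_right 0. \<forall>\<theta>. lg_chart K (mollified \<epsilon>) \<theta> \<rho> (mu_K K \<gamma> - 1)"
    using eventually_lg_chart_mollified[of 1] by auto
  obtain c where "c > 0" and separated:
    "\<And>s t. 0 \<le> s \<Longrightarrow> t \<le> T \<Longrightarrow> \<rho> \<le> t - s \<Longrightarrow> t - s \<le> T - \<rho> \<Longrightarrow> c \<le> dist (\<gamma> s) (\<gamma> t)"
    using periodic_injective_separated[OF curve_continuous curve_periodic curve_inj \<open>\<rho> > 0\<close>] by blast
  have "\<forall>\<^sub>F \<epsilon> in at_right 0. \<forall>s. norm (mollified \<epsilon> s - \<gamma> s) \<le> c/4"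
    by (rule mollified_uniformly_close) (use \<open>c > 0\<close> in simp)
  with charts eventually_at_right_less show ?thesis
  proof eventually_elim
    case (elim \<epsilon>)
    have "dist (mollified \<epsilon> s) (\<gamma> s) < c / 2" for s
    proof -
      have "norm (mollified \<epsilon> s - \<gamma> s) \<le> c / 4" using elim by blast
      with \<open>c > 0\<close> show ?thesis by (simp add: dist_norm)
    qed
    with elim have "inj_on (mollified \<epsilon>) {0..<T}"
      by (intro inj_on_period_if_lg_charts_close[of "mollified \<epsilon>", OF mollified_periodic _ separated])
        auto
    then have "jordan_curve (mollified \<epsilon>)"
      unfolding jordan_curve_def using elim period_pos mollified_continuous mollified_periodic by blast
    moreover have "locally_lipschitz_graphical K (mollified \<epsilon>)"
      using elim unfolding locally_lipschitz_graphical_def lg_chart_def by blast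
    ultimately show ?case by blast
  qed
qed

lemma Liminf_mu_K_mollified_ge:
  "Liminf (at_right 0) (\<lambda>\<epsilon>. ereal (mu_K K (mollified \<epsilon>))) \<ge> ereal (mu_K K \<gamma>)"
proof (rule ereal_le_epsilon2)
  fix \<delta> :: real assume "\<delta> > 0"
  then obtain \<rho> where "\<forall>\<^sub>F \<epsilon> in at_right 0. \<forall>\<theta>. lg_chart K (mollified \<epsilon>) \<theta> \<rho> (mu_K K \<gamma> - \<delta>)"
    by (rule eventually_lg_chart_mollified)
  with eventually_at_right_less have "\<forall>\<^sub>F \<epsilon> in at_right 0. ereal (mu_K K \<gamma> - \<delta>) \<le> ereal (mu_K K (mollified \<epsilon>))"
  proof eventually_elim
    case (elim \<epsilon>)
    have "mu_K K \<gamma> - \<delta> \<le> mu_K K (mollified \<epsilon>)"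
      by (rule mu_K_ge_lg_chart[OF bounded_mollified[OF elim(1)]]) (use elim(2) in blast)
    then show ?case by simp
  qed
  then have "ereal (mu_K K \<gamma> - \<delta>) \<le> Liminf (at_right 0) (\<lambda>\<epsilon>. ereal (mu_K K (mollified \<epsilon>)))"
    by (rule Liminf_bounded)
  then show "ereal (mu_K K \<gamma>) \<le> Liminf (at_right 0) (\<lambda>\<epsilon>. ereal (mu_K K (mollified \<epsilon>))) + ereal \<delta>"
    by (metis add_right_mono diff_add_cancel plus_ereal.simps(1))
qed

end

lemma smooth_fun_continuous: "smooth_fun \<phi> \<Longrightarrow> continuous_on UNIV \<phi>"
  unfolding smooth_fun_def
  by (metis DERIV_isCont continuous_at_imp_continuous_on)

theorem lemma4p3:
  fixes \<gamma> :: "real \<Rightarrow> complex" and \<phi> :: "real \<Rightarrow> real" and K :: real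
  assumes "jordan_curve \<gamma>"
    and "locally_lipschitz_graphical K \<gamma>"
    and "smooth_fun \<phi>"
    and "\<And>u. \<phi> u \<ge> 0"
    and "\<And>u. \<bar>u\<bar> > 1 \<Longrightarrow> \<phi> u = 0"
    and "(\<phi> has_integral 1) UNIV"
  shows "(\<forall>\<^sub>F \<epsilon> in at_right 0. jordan_curve (mollify \<phi> \<epsilon> \<gamma>) \<and>
              locally_lipschitz_graphical K (mollify \<phi> \<epsilon> \<gamma>))
       \<and> Liminf (at_right 0) (\<lambda>\<epsilon>. ereal (mu_K K (mollify \<phi> \<epsilon> \<gamma>))) \<ge> ereal (mu_K K \<gamma>)"
proof -
  obtain T where "T > 0" "\<And>s. \<gamma> (s + T) = \<gamma> s" "inj_on \<gamma> {0..<T}" "continuous_on UNIV \<gamma>"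
    using assms(1) unfolding jordan_curve_def by blast
  then interpret mollified_curve \<phi> \<gamma> T K
    using assms(2-6) smooth_fun_continuous by unfold_locales auto
  show ?thesis
    using eventually_mollified_jordan_lipschitz_graphical Liminf_mu_K_mollified_ge by blast
qed

end
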